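(* Let $R>r>0$ with $1<R/r<\sqrt{2}$. Then the standard torus $T_{R,r}$ is conformally equivalent to the standard torus $T_{R,\sqrt{R^2-r^2}}$. Moreover, the map $T_{R,r}\mapsto T_{R,\sqrt{R^2-r^2}}$ is a bijection between the set of standard tori $T_{R,r}$ with $1<R/r<\sqrt{2}$ and the set of standard tori $T_{R,r}$ with $\sqrt{2}<R/r$.
   Context: For $R>r>0$, the standard torus $T_{R,r}\subset\mathbb{R}^3$ is the image of $\Phi(\theta,\varphi)=\big((R+r\cos\varphi)\cos\theta,(R+r\cos\varphi)\sin\theta,r\sin\varphi\big)$, $(\theta,\varphi)\in\mathbb{R}^2$, equipped with the complex structure (conformal class) induced by the Euclidean metric of $\mathbb{R}^3$. Standard tori are indexed by the pairs $(R,r)$ with $R>r>0$. *)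

theory Defs
  imports "HOL-Analysis.Analysis"
begin

definition torus_param :: "real \<Rightarrow> real \<Rightarrow> real \<times> real \<Rightarrow> real \<times> real \<times> real" where
  "torus_param R r p = (let \<theta> = fst p; \<phi> = snd p in
     ((R + r * cos \<phi>) * cos \<theta>, (R + r * cos \<phi>) * sin \<theta>, r * sin \<phi>))"

definition torus :: "real \<Rightarrow> real \<Rightarrow> (real \<times> real \<times> real) set" where
  "torus R r = range (torus_param R r)"

definition standard_torus_index :: "real \<Rightarrow> real \<Rightarrow> bool" where
  "standard_torus_index R r \<longleftrightarrow> 0 < r \<and> r < R"

definition torus_metric :: "real \<Rightarrow> real \<Rightarrow> real \<times> real \<Rightarrow> real \<times> real \<Rightarrow> real \<times> real \<Rightarrow> real" where
  "torus_metric R r p v w =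
     frechet_derivative (torus_param R r) (at p) v \<bullet> frechet_derivative (torus_param R r) (at p) w"

text \<open>Conformal equivalence (biholomorphic equivalence of the induced complex
  structures): a homeomorphism F between the tori whose lift g to the parameter
  plane is differentiable, with differential that is orientation preserving and
  conformal with respect to the induced metrics.\<close>
definition conformally_equivalent :: "real \<Rightarrow> real \<Rightarrow> real \<Rightarrow> real \<Rightarrow> bool" where
  "conformally_equivalent R r R' r' \<longleftrightarrow>
     (\<exists>F F' g Dg.
        homeomorphism (torus R r) (torus R' r') F F' \<and>
        (\<forall>x. torus_param R' r' (g x) = F (torus_param R r x)) \<and>
        (\<forall>x. (g has_derivative Dg x) (at x)) \<and>
        (\<forall>x. fst (Dg x (1,0)) * snd (Dg x (0,1)) - snd (Dg x (1,0)) * fst (Dg x (0,1)) > 0) \<and>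
        (\<forall>x. \<exists>c>0. \<forall>v w. torus_metric R' r' (g x) (Dg x v) (Dg x w) = c * torus_metric R r x v w))"

end

theory Submission
  imports Defs
begin

(* The induced metric (R + r cos \<phi>)\<^sup>2 d\<theta>\<^sup>2 + r\<^sup>2 d\<phi>\<^sup>2 of T_{R,r} is conformal to
   d\<theta>\<^sup>2 + (r / (R + r cos \<phi>))\<^sup>2 d\<phi>\<^sup>2. With s = sqrt (R\<^sup>2 - r\<^sup>2), the circle diffeomorphism
   \<psi> = circle_mobius ((R - s) / r) \<phi> has d\<psi>/d\<phi> = s / (R + r cos \<phi>), so the metric is
   conformal to d\<theta>\<^sup>2 + (r / s)\<^sup>2 d\<psi>\<^sup>2: T_{R,r} is conformally the flat rectangular torus
   with side ratio r / s, and T_{R,s} the one with side ratio s / r. Exchanging the two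
   angles, one of them reversed to preserve orientation, therefore gives a conformal map
   T_{R,r} \<rightarrow> T_{R,s}. The bound R / r < sqrt 2 only enters the bijection: r \<mapsto> sqrt (R\<^sup>2 - r\<^sup>2)
   is an involution, and R / r < sqrt 2 iff R / s > sqrt 2. *)

(* The boundary map e^{it} \<mapsto> (e^{it} + \<sigma>) / (1 + \<sigma> e^{it}) of a disc automorphism, in angle
   coordinates: its argument is t - 2 arg (1 + \<sigma> e^{it}). *)
definition circle_mobius :: "real \<Rightarrow> real \<Rightarrow> real" where
  "circle_mobius \<sigma> t = t - 2 * arctan (\<sigma> * sin t / (1 + \<sigma> * cos t))"

definition circle_mobius_deriv :: "real \<Rightarrow> real \<Rightarrow> real" where
  "circle_mobius_deriv \<sigma> t = (1 - \<sigma>\<^sup>2) / (1 + 2 * \<sigma> * cos t + \<sigma>\<^sup>2)"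

lemma circle_mobius_denom_pos:
  fixes \<sigma> t :: real
  assumes "\<bar>\<sigma>\<bar> < 1"
  shows "0 < 1 + \<sigma> * cos t"
proof -
  have "\<bar>\<sigma> * cos t\<bar> \<le> \<bar>\<sigma>\<bar>"
    using abs_cos_le_one[of t] by (simp add: abs_mult mult_left_le)
  then show ?thesis using assms by linarith
qed

lemma circle_mobius_norm_eq:
  fixes \<sigma> t :: real
  shows "(1 + \<sigma> * cos t)\<^sup>2 + (\<sigma> * sin t)\<^sup>2 = 1 + 2 * \<sigma> * cos t + \<sigma>\<^sup>2"
  using sin_cos_squared_add[of t] by algebra

lemma circle_mobius_norm_pos:
  fixes \<sigma> t :: real
  assumes "\<bar>\<sigma>\<bar> < 1"
  shows "0 < 1 + 2 * \<sigma> * cos t + \<sigma>\<^sup>2"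
proof -
  have "0 < (1 + \<sigma> * cos t)\<^sup>2"
    using circle_mobius_denom_pos[OF assms, of t] by simp
  then show ?thesis
    using circle_mobius_norm_eq[of \<sigma> t] zero_le_power2[of "\<sigma> * sin t"] by linarith
qed

lemma circle_mobius_deriv_pos:
  assumes "\<bar>\<sigma>\<bar> < 1"
  shows "0 < circle_mobius_deriv \<sigma> t"
  using circle_mobius_norm_pos[OF assms] assms
  by (simp add: circle_mobius_deriv_def abs_square_less_1)

lemma has_real_derivative_circle_mobius:
  assumes "\<bar>\<sigma>\<bar> < 1"
  shows "(circle_mobius \<sigma> has_real_derivative circle_mobius_deriv \<sigma> t) (at t)"
proof -
  define D where "D = 1 + \<sigma> * cos t"
  define S where "S = \<sigma> * sin t"
  have D: "0 < D" unfolding D_def by (rule circle_mobius_denom_pos[OF assms])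
  have "((\<lambda>t. \<sigma> * sin t / (1 + \<sigma> * cos t)) has_real_derivative (\<sigma> * cos t + \<sigma>\<^sup>2) / D\<^sup>2) (at t)"
  proof -
    have "cos t * \<sigma> * (1 + \<sigma> * cos t) + \<sigma> * sin t * (sin t * \<sigma>) = \<sigma> * cos t + \<sigma>\<^sup>2"
      using sin_cos_squared_add[of t] by algebra
    then show ?thesis
      using D unfolding D_def by (auto intro!: derivative_eq_intros simp: power2_eq_square)
  qed
  then have "(circle_mobius \<sigma> has_real_derivative
      1 - 2 * (inverse (1 + (S / D)\<^sup>2) * ((\<sigma> * cos t + \<sigma>\<^sup>2) / D\<^sup>2))) (at t)"
    unfolding circle_mobius_def[abs_def] S_def D_def
    by (intro DERIV_diff DERIV_cmult DERIV_ident DERIV_chain2[OF DERIV_arctan])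
  moreover have "inverse (1 + (S / D)\<^sup>2) * ((\<sigma> * cos t + \<sigma>\<^sup>2) / D\<^sup>2)
      = (\<sigma> * cos t + \<sigma>\<^sup>2) / (D\<^sup>2 + S\<^sup>2)"
  proof -
    have "1 + (S / D)\<^sup>2 = (D\<^sup>2 + S\<^sup>2) / D\<^sup>2"
      using D by (simp add: power_divide add_divide_distrib)
    then show ?thesis using D by simp
  qed
  moreover have "1 - 2 * ((\<sigma> * cos t + \<sigma>\<^sup>2) / (D\<^sup>2 + S\<^sup>2)) = circle_mobius_deriv \<sigma> t"
    using circle_mobius_norm_pos[OF assms, of t]
    unfolding D_def S_def circle_mobius_norm_eq circle_mobius_deriv_def by (simp add: field_simps)
  ultimately show ?thesis by (simp only:)
qed

lemma cos_double_arctan: "cos (2 * arctan x) = (1 - x\<^sup>2) / (1 + x\<^sup>2)"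
proof -
  have "0 < 1 + x\<^sup>2" by (simp add: add_pos_nonneg)
  then show ?thesis
    by (simp add: cos_double cos_arctan sin_arctan power_divide diff_divide_distrib)
qed

lemma sin_double_arctan: "sin (2 * arctan x) = 2 * x / (1 + x\<^sup>2)"
proof -
  have "0 < 1 + x\<^sup>2" by (simp add: add_pos_nonneg)
  then show ?thesis by (simp add: sin_double cos_arctan sin_arctan)
qed

lemma cos_circle_mobius:
  assumes "\<bar>\<sigma>\<bar> < 1"
  shows "cos (circle_mobius \<sigma> t) = ((1 + \<sigma>\<^sup>2) * cos t + 2 * \<sigma>) / (1 + 2 * \<sigma> * cos t + \<sigma>\<^sup>2)"
proof -
  define D where "D = 1 + \<sigma> * cos t"
  define S where "S = \<sigma> * sin t"
  have D: "0 < D" unfolding D_def by (rule circle_mobius_denom_pos[OF assms])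
  have Q: "D\<^sup>2 + S\<^sup>2 = 1 + 2 * \<sigma> * cos t + \<sigma>\<^sup>2"
    unfolding D_def S_def by (rule circle_mobius_norm_eq)
  have "cos (circle_mobius \<sigma> t)
      = cos t * ((1 - (S/D)\<^sup>2) / (1 + (S/D)\<^sup>2)) + sin t * (2 * (S/D) / (1 + (S/D)\<^sup>2))"
    by (simp add: circle_mobius_def cos_diff cos_double_arctan sin_double_arctan D_def S_def)
  also have "\<dots> = cos t * ((D\<^sup>2 - S\<^sup>2) / (D\<^sup>2 + S\<^sup>2)) + sin t * (2 * S * D / (D\<^sup>2 + S\<^sup>2))"
  proof -
    have d: "D\<^sup>2 \<noteq> 0" using D by simp
    have "1 + (S/D)\<^sup>2 = (D\<^sup>2 + S\<^sup>2) / D\<^sup>2"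
      using d by (simp add: power_divide add_divide_distrib)
    moreover have "1 - (S/D)\<^sup>2 = (D\<^sup>2 - S\<^sup>2) / D\<^sup>2"
      using d by (simp add: power_divide diff_divide_distrib)
    moreover have "2 * (S/D) = 2 * S * D / D\<^sup>2"
      using D by (simp add: power2_eq_square)
    ultimately show ?thesis using d by (simp only:) simp
  qed
  also have "\<dots> = ((1 + \<sigma>\<^sup>2) * cos t + 2 * \<sigma>) / (1 + 2 * \<sigma> * cos t + \<sigma>\<^sup>2)"
    unfolding times_divide_eq_right add_divide_distrib[symmetric] Q unfolding D_def S_def
    using sin_cos_squared_add[of t] by (intro arg_cong[where f = "\<lambda>u. u / _"]) algebra
  finally show ?thesis .
qed

lemma circle_mobius_deriv_inverse:
  assumes "\<bar>\<sigma>\<bar> < 1"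
  shows "circle_mobius_deriv (- \<sigma>) (circle_mobius \<sigma> t) * circle_mobius_deriv \<sigma> t = 1"
proof -
  define Q where "Q = 1 + 2 * \<sigma> * cos t + \<sigma>\<^sup>2"
  define N where "N = (1 + \<sigma>\<^sup>2) * cos t + 2 * \<sigma>"
  have Q: "0 < Q" unfolding Q_def by (rule circle_mobius_norm_pos[OF assms])
  have a: "0 < 1 - \<sigma>\<^sup>2" using assms by (simp add: abs_square_less_1)
  have "1 + 2 * - \<sigma> * (N / Q) + (- \<sigma>)\<^sup>2 = (1 - \<sigma>\<^sup>2)\<^sup>2 / Q"
  proof -
    have "Q * (1 + \<sigma>\<^sup>2) - 2 * \<sigma> * N = (1 - \<sigma>\<^sup>2)\<^sup>2"
      unfolding Q_def N_def by (simp add: power2_eq_square algebra_simps)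
    then show ?thesis using Q by (simp add: field_simps)
  qed
  then show ?thesis
    using Q a unfolding circle_mobius_deriv_def cos_circle_mobius[OF assms] N_def[symmetric] Q_def[symmetric]
    by (simp add: power2_eq_square)
qed

lemma circle_mobius_inverse:
  assumes "\<bar>\<sigma>\<bar> < 1"
  shows "circle_mobius (- \<sigma>) (circle_mobius \<sigma> t) = t"
proof -
  have "\<bar>- \<sigma>\<bar> < 1" using assms by simp
  then have "\<forall>u. ((\<lambda>u. circle_mobius (- \<sigma>) (circle_mobius \<sigma> u) - u) has_real_derivative 0) (at u)"
    using DERIV_diff[OF DERIV_chain2[OF has_real_derivative_circle_mobius[of "- \<sigma>"]
          has_real_derivative_circle_mobius[OF assms]] DERIV_ident]
      circle_mobius_deriv_inverse[OF assms] by simp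
  from DERIV_isconst_all[OF this, of t 0] show ?thesis by (simp add: circle_mobius_def)
qed

lemma circle_mobius_cong:
  assumes "cos u = cos v" "sin u = sin v"
  shows "cos (circle_mobius \<sigma> u) = cos (circle_mobius \<sigma> v) \<and> sin (circle_mobius \<sigma> u) = sin (circle_mobius \<sigma> v)"
  using assms by (simp add: circle_mobius_def cos_diff sin_diff)

lemma circle_mobius_cong_iff:
  assumes "\<bar>\<sigma>\<bar> < 1"
  shows "cos (circle_mobius \<sigma> u) = cos (circle_mobius \<sigma> v) \<and> sin (circle_mobius \<sigma> u) = sin (circle_mobius \<sigma> v)
    \<longleftrightarrow> cos u = cos v \<and> sin u = sin v"
  using circle_mobius_cong[of "circle_mobius \<sigma> u" "circle_mobius \<sigma> v" "- \<sigma>"] circle_mobius_cong[of u v \<sigma>]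
  by (auto simp: circle_mobius_inverse[OF assms])

lemma torus_axis_distance_pos:
  fixes R r t :: real
  assumes "0 < r" "r < R"
  shows "0 < R + r * cos t"
proof -
  have "- r \<le> r * cos t"
    using assms(1) cos_ge_minus_one[of t] by (simp add: mult_le_cancel_left_pos[of r "-1", simplified])
  then show ?thesis using assms(2) by linarith
qed

lemma torus_param_eq_iff:
  assumes "0 < r" "r < R"
  shows "torus_param R r x = torus_param R r y \<longleftrightarrow>
    cos (fst x) = cos (fst y) \<and> sin (fst x) = sin (fst y) \<and> cos (snd x) = cos (snd y) \<and> sin (snd x) = sin (snd y)"
proof
  assume eq: "torus_param R r x = torus_param R r y"
  define A where "A = R + r * cos (snd x)"
  define B where "B = R + r * cos (snd y)"
  have pos: "0 < A" "0 < B"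
    unfolding A_def B_def using torus_axis_distance_pos[OF assms] by auto
  have e: "A * cos (fst x) = B * cos (fst y)" "A * sin (fst x) = B * sin (fst y)" "sin (snd x) = sin (snd y)"
    using eq assms(1) by (simp_all add: torus_param_def Let_def A_def B_def)
  have "A\<^sup>2 = (A * cos (fst x))\<^sup>2 + (A * sin (fst x))\<^sup>2"
    using sin_cos_squared_add[of "fst x"] by algebra
  also have "\<dots> = B\<^sup>2"
    unfolding e using sin_cos_squared_add[of "fst y"] by algebra
  finally have "A = B" using pos by (simp add: power2_eq_iff)
  then show "cos (fst x) = cos (fst y) \<and> sin (fst x) = sin (fst y) \<and> cos (snd x) = cos (snd y) \<and> sin (snd x) = sin (snd y)"
    using e pos assms(1) by (auto simp: A_def B_def)
qed (simp add: torus_param_def Let_def)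

lemma has_derivative_torus_param:
  "(torus_param R r has_derivative (\<lambda>v.
      fst v *\<^sub>R (- (R + r * cos (snd x)) * sin (fst x), (R + r * cos (snd x)) * cos (fst x), 0) +
      snd v *\<^sub>R (- r * sin (snd x) * cos (fst x), - r * sin (snd x) * sin (fst x), r * cos (snd x)))) (at x)"
proof -
  have param: "torus_param R r = (\<lambda>x. ((R + r * cos (snd x)) * cos (fst x), (R + r * cos (snd x)) * sin (fst x), r * sin (snd x)))"
    by (auto simp: torus_param_def fun_eq_iff Let_def)
  show ?thesis unfolding param
    by (auto intro!: derivative_eq_intros simp: fun_eq_iff algebra_simps)
qed

lemma torus_metric_eq:
  "torus_metric R r x v w = (R + r * cos (snd x))\<^sup>2 * fst v * fst w + r\<^sup>2 * snd v * snd w"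
  unfolding torus_metric_def frechet_derivative_at[OF has_derivative_torus_param, symmetric]
  by (simp add: inner_prod_def)
     (use sin_cos_squared_add[of "fst x"] sin_cos_squared_add[of "snd x"] in algebra)

lemma continuous_on_torus_param: "continuous_on S (torus_param R r)"
  by (meson has_derivative_torus_param continuous_at_imp_continuous_on has_derivative_continuous)

lemma torus_eq_image_cbox: "torus R r = torus_param R r ` cbox (0, 0) (2 * pi, 2 * pi)"
proof
  show "torus R r \<subseteq> torus_param R r ` cbox (0, 0) (2 * pi, 2 * pi)"
  proof
    fix q assume "q \<in> torus R r"
    then obtain x where q: "q = torus_param R r x" by (auto simp: torus_def)
    obtain a where a: "0 \<le> a" "a < 2 * pi" "cos (fst x) = cos a" "sin (fst x) = sin a"
      using sincos_total_2pi[of "cos (fst x)" "sin (fst x)"] by auto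
    obtain b where b: "0 \<le> b" "b < 2 * pi" "cos (snd x) = cos b" "sin (snd x) = sin b"
      using sincos_total_2pi[of "cos (snd x)" "sin (snd x)"] by auto
    have "q = torus_param R r (a, b)"
      using a b by (simp add: q torus_param_def Let_def)
    moreover have "(a, b) \<in> cbox (0, 0) (2 * pi, 2 * pi)"
      using a b by (auto simp: cbox_Pair_iff)
    ultimately show "q \<in> torus_param R r ` cbox (0, 0) (2 * pi, 2 * pi)" by blast
  qed
qed (auto simp: torus_def)

lemma compact_torus: "compact (torus R r)"
  unfolding torus_eq_image_cbox
  by (rule compact_continuous_image[OF continuous_on_torus_param compact_cbox])

lemma continuous_on_compact_quotient:
  fixes p :: "'a::metric_space \<Rightarrow> 'b::metric_space" and F :: "'b \<Rightarrow> 'c::metric_space"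
  assumes "compact S" "continuous_on S p" "continuous_on S (F \<circ> p)"
  shows "continuous_on (p ` S) F"
proof -
  have "quotient_map (top_of_set S) (top_of_set (p ` S)) p"
    by (rule continuous_imp_quotient_map)
       (use assms in \<open>auto simp: compact_space_subtopology Hausdorff_space_subtopology\<close>)
  then have "continuous_map (top_of_set (p ` S)) euclidean F"
    by (rule continuous_compose_quotient_map) (use assms in simp)
  then show ?thesis by simp
qed

lemma conformally_equivalentI:
  assumes descends: "\<And>x y. torus_param R' r' (g x) = torus_param R' r' (g y) \<longleftrightarrow> torus_param R r x = torus_param R r y"
    and "surj g"
    and deriv: "\<And>x. (g has_derivative Dg x) (at x)"
    and "\<And>x. fst (Dg x (1,0)) * snd (Dg x (0,1)) - snd (Dg x (1,0)) * fst (Dg x (0,1)) > 0"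
    and "\<And>x. \<exists>c>0. \<forall>v w. torus_metric R' r' (g x) (Dg x v) (Dg x w) = c * torus_metric R r x v w"
  shows "conformally_equivalent R r R' r'"
proof -
  define F where "F q = torus_param R' r' (g (SOME x. torus_param R r x = q))" for q
  have lift: "F (torus_param R r x) = torus_param R' r' (g x)" for x
    unfolding F_def by (rule descends[THEN iffD2], rule someI[of _ x], rule refl)
  have "inj_on F (torus R r)"
    by (auto simp: inj_on_def torus_def lift descends)
  moreover have "F ` torus R r = torus R' r'"
  proof -
    have "F ` torus R r = torus_param R' r' ` range g"
      unfolding torus_def image_image lift ..
    then show ?thesis
      using \<open>surj g\<close> by (simp add: torus_def)
  qed
  moreover have "continuous_on (torus R r) F"
  proof -
    have "continuous_on S g" for S
      using deriv by (meson continuous_at_imp_continuous_on has_derivative_continuous)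
    then have "continuous_on (cbox (0, 0) (2 * pi, 2 * pi)) (F \<circ> torus_param R r)"
      by (auto simp: comp_def lift intro!: continuous_on_compose2[OF continuous_on_torus_param])
    then show ?thesis
      unfolding torus_eq_image_cbox
      by (intro continuous_on_compact_quotient compact_cbox continuous_on_torus_param)
  qed
  ultimately obtain F' where "homeomorphism (torus R r) (torus R' r') F F'"
    using homeomorphism_compact[OF compact_torus] by blast
  then show ?thesis
    unfolding conformally_equivalent_def using lift deriv assms(4,5)
    by (intro exI[of _ F] exI[of _ F'] exI[of _ g] exI[of _ Dg]) simp
qed

lemma circle_mobius_pythagorean:
  fixes R r s :: real
  assumes "0 < r" "0 < s" "0 < R" and pyth: "R\<^sup>2 = r\<^sup>2 + s\<^sup>2"
  shows "\<bar>(R - s) / r\<bar> < 1" and "circle_mobius_deriv ((R - s) / r) t = s / (R + r * cos t)"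
proof -
  have "s < R" "r < R"
    using assms by (auto intro: power_less_imp_less_base[of _ 2])
  have "r * (R - s) < (R + s) * (R - s)"
    using \<open>s < R\<close> \<open>r < R\<close> assms(2) by (intro mult_strict_right_mono) auto
  also have "\<dots> = r * r"
    using pyth by (simp add: power2_eq_square algebra_simps)
  finally have "R - s < r"
    using assms(1) by simp
  then show "\<bar>(R - s) / r\<bar> < 1"
    using \<open>s < R\<close> assms(1) by simp
  define \<sigma> where "\<sigma> = (R - s) / r"
  have "circle_mobius_deriv \<sigma> t = r\<^sup>2 * (1 - \<sigma>\<^sup>2) / (r\<^sup>2 * (1 + 2 * \<sigma> * cos t + \<sigma>\<^sup>2))"
    using assms(1) by (simp add: circle_mobius_deriv_def)
  also have "\<dots> = (2 * (R - s) * s) / (2 * (R - s) * (R + r * cos t))"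
  proof -
    have "r\<^sup>2 * (1 - \<sigma>\<^sup>2) = r\<^sup>2 - (R - s)\<^sup>2"
      unfolding \<sigma>_def using assms(1) by (simp add: power_divide right_diff_distrib)
    also have "\<dots> = 2 * (R - s) * s"
      using pyth by algebra
    finally have num: "r\<^sup>2 * (1 - \<sigma>\<^sup>2) = 2 * (R - s) * s" .
    have "r\<^sup>2 * (1 + 2 * \<sigma> * cos t + \<sigma>\<^sup>2) = r\<^sup>2 + 2 * (R - s) * r * cos t + (R - s)\<^sup>2"
      unfolding \<sigma>_def using assms(1) by (simp add: power_divide distrib_left power2_eq_square)
    also have "\<dots> = 2 * (R - s) * (R + r * cos t)"
      using pyth by algebra
    finally show ?thesis unfolding num by simp
  qed
  also have "\<dots> = s / (R + r * cos t)"
    using \<open>s < R\<close> by simp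
  finally show "circle_mobius_deriv \<sigma> t = s / (R + r * cos t)" .
qed

lemma dual_radius:
  fixes R r :: real
  assumes "0 < r" "r < R"
  shows "0 < sqrt (R\<^sup>2 - r\<^sup>2)" "sqrt (R\<^sup>2 - r\<^sup>2) < R" "R\<^sup>2 = r\<^sup>2 + (sqrt (R\<^sup>2 - r\<^sup>2))\<^sup>2"
proof -
  have "r\<^sup>2 < R\<^sup>2" using assms by (simp add: power_strict_mono)
  then show "0 < sqrt (R\<^sup>2 - r\<^sup>2)" "R\<^sup>2 = r\<^sup>2 + (sqrt (R\<^sup>2 - r\<^sup>2))\<^sup>2" by simp_all
  show "sqrt (R\<^sup>2 - r\<^sup>2) < R"
    using assms by (intro real_less_lsqrt) simp_all
qed

lemma conformally_equivalent_dual_torus: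
  assumes "0 < r" "r < R"
  shows "conformally_equivalent R r R (sqrt (R\<^sup>2 - r\<^sup>2))"
proof -
  define s where "s = sqrt (R\<^sup>2 - r\<^sup>2)"
  have s: "0 < s" "s < R" and pyth: "R\<^sup>2 = r\<^sup>2 + s\<^sup>2"
    using dual_radius[OF assms] by (simp_all add: s_def)
  have "0 < R" using assms by simp
  define \<rho>\<^sub>1 where "\<rho>\<^sub>1 = (R - s) / r"
  define \<rho>\<^sub>2 where "\<rho>\<^sub>2 = (R - r) / s"
  have \<rho>\<^sub>1: "\<bar>\<rho>\<^sub>1\<bar> < 1" and deriv1: "circle_mobius_deriv \<rho>\<^sub>1 t = s / (R + r * cos t)" for t
    using circle_mobius_pythagorean[OF assms(1) s(1) \<open>0 < R\<close> pyth] by (simp_all add: \<rho>\<^sub>1_def)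
  have \<rho>\<^sub>2: "\<bar>- \<rho>\<^sub>2\<bar> < 1" and deriv2: "circle_mobius_deriv \<rho>\<^sub>2 t = r / (R + s * cos t)" for t
    using circle_mobius_pythagorean[OF s(1) assms(1) \<open>0 < R\<close>] pyth by (simp_all add: \<rho>\<^sub>2_def add.commute)
  have deriv2_inverse: "circle_mobius_deriv (- \<rho>\<^sub>2) t = (R + s * cos (circle_mobius (- \<rho>\<^sub>2) t)) / r" for t
  proof -
    have "circle_mobius_deriv \<rho>\<^sub>2 (circle_mobius (- \<rho>\<^sub>2) t) * circle_mobius_deriv (- \<rho>\<^sub>2) t = 1"
      using circle_mobius_deriv_inverse[OF \<rho>\<^sub>2] by simp
    then show ?thesis
      using deriv2 torus_axis_distance_pos[OF s, of "circle_mobius (- \<rho>\<^sub>2) t"] assms(1)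
      by (simp add: field_simps)
  qed
  define g where "g x = (circle_mobius \<rho>\<^sub>1 (snd x), circle_mobius (- \<rho>\<^sub>2) (- fst x))" for x
  define Dg where "Dg x v = (circle_mobius_deriv \<rho>\<^sub>1 (snd x) * snd v, - circle_mobius_deriv (- \<rho>\<^sub>2) (- fst x) * fst v)"
    for x v :: "real \<times> real"
  show ?thesis
    unfolding s_def[symmetric]
  proof (rule conformally_equivalentI[where g = g and Dg = Dg])
    show "torus_param R s (g x) = torus_param R s (g y) \<longleftrightarrow> torus_param R r x = torus_param R r y" for x y
      using circle_mobius_cong_iff[OF \<rho>\<^sub>1, of "snd x" "snd y"]
        circle_mobius_cong_iff[OF \<rho>\<^sub>2, of "- fst x" "- fst y"]
      by (auto simp: torus_param_eq_iff[OF assms] torus_param_eq_iff[OF s] g_def)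
    show "surj g"
    proof (rule surjI)
      show "g (- circle_mobius \<rho>\<^sub>2 (snd y), circle_mobius (- \<rho>\<^sub>1) (fst y)) = y" for y
        using circle_mobius_inverse[of "- \<rho>\<^sub>1"] circle_mobius_inverse[of \<rho>\<^sub>2] \<rho>\<^sub>1 \<rho>\<^sub>2
        by (simp add: g_def)
    qed
    show "(g has_derivative Dg x) (at x)" for x
    proof -
      have "g = (\<lambda>x. (circle_mobius \<rho>\<^sub>1 (snd x), circle_mobius (- \<rho>\<^sub>2) (- fst x)))"
        by (simp add: g_def fun_eq_iff)
      moreover have "Dg x = (\<lambda>v. (snd v * circle_mobius_deriv \<rho>\<^sub>1 (snd x), - fst v * circle_mobius_deriv (- \<rho>\<^sub>2) (- fst x)))"
        by (simp add: Dg_def fun_eq_iff)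
      ultimately show ?thesis
        by (simp only:) (intro has_derivative_Pair DERIV_compose_FDERIV[OF has_real_derivative_circle_mobius]
            \<rho>\<^sub>1 \<rho>\<^sub>2 derivative_intros)
    qed
    show "fst (Dg x (1,0)) * snd (Dg x (0,1)) - snd (Dg x (1,0)) * fst (Dg x (0,1)) > 0" for x
      using circle_mobius_deriv_pos[OF \<rho>\<^sub>1] circle_mobius_deriv_pos[OF \<rho>\<^sub>2] by (simp add: Dg_def)
    show "\<exists>c>0. \<forall>v w. torus_metric R s (g x) (Dg x v) (Dg x w) = c * torus_metric R r x v w" for x
    proof (intro exI conjI allI)
      define P where "P = R + r * cos (snd x)"
      define d where "d = circle_mobius_deriv (- \<rho>\<^sub>2) (- fst x)"
      have "0 < P" unfolding P_def by (rule torus_axis_distance_pos[OF assms])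
      have "0 < d" unfolding d_def by (rule circle_mobius_deriv_pos[OF \<rho>\<^sub>2])
      then show "0 < (s * d / P)\<^sup>2" using s(1) \<open>0 < P\<close> by simp
      have "R + s * cos (snd (g x)) = r * d"
        unfolding d_def deriv2_inverse g_def using assms(1) by simp
      then show "torus_metric R s (g x) (Dg x v) (Dg x w) = (s * d / P)\<^sup>2 * torus_metric R r x v w" for v w
        unfolding torus_metric_eq using \<open>0 < P\<close>
        by (simp add: Dg_def deriv1 P_def[symmetric] d_def[symmetric] field_simps power2_eq_square)
    qed
  qed
qed

lemma divide_less_sqrt_iff:
  fixes a b c :: real
  assumes "0 \<le> a" "0 < b"
  shows "a / b < sqrt c \<longleftrightarrow> a\<^sup>2 < c * b\<^sup>2"
proof -
  have "a / b < sqrt c \<longleftrightarrow> sqrt ((a / b)\<^sup>2) < sqrt c"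
    using assms by simp
  also have "\<dots> \<longleftrightarrow> a\<^sup>2 < c * b\<^sup>2"
    using assms by (simp add: power_divide divide_less_eq)
  finally show ?thesis .
qed

lemma sqrt_less_divide_iff:
  fixes a b c :: real
  assumes "0 \<le> a" "0 < b"
  shows "sqrt c < a / b \<longleftrightarrow> c * b\<^sup>2 < a\<^sup>2"
proof -
  have "sqrt c < a / b \<longleftrightarrow> sqrt c < sqrt ((a / b)\<^sup>2)"
    using assms by simp
  also have "\<dots> \<longleftrightarrow> c * b\<^sup>2 < a\<^sup>2"
    using assms by (simp add: power_divide less_divide_eq)
  finally show ?thesis .
qed

lemma dual_radius_ratio:
  fixes R r :: real
  assumes "0 < r" "r < R"
  shows "R / r < sqrt 2 \<longleftrightarrow> sqrt 2 < R / sqrt (R\<^sup>2 - r\<^sup>2)"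
  using dual_radius[OF assms] assms
  by (simp add: divide_less_sqrt_iff sqrt_less_divide_iff)

lemma standard_torus_index_dual:
  assumes "standard_torus_index R r"
  shows "standard_torus_index R (sqrt (R\<^sup>2 - r\<^sup>2))"
    and "sqrt (R\<^sup>2 - (sqrt (R\<^sup>2 - r\<^sup>2))\<^sup>2) = r"
    and "1 < R / r"
    and "R / r < sqrt 2 \<longleftrightarrow> sqrt 2 < R / sqrt (R\<^sup>2 - r\<^sup>2)"
proof -
  have r: "0 < r" "r < R" using assms by (simp_all add: standard_torus_index_def)
  show "standard_torus_index R (sqrt (R\<^sup>2 - r\<^sup>2))"
    using dual_radius[OF r] by (simp add: standard_torus_index_def)
  show "sqrt (R\<^sup>2 - (sqrt (R\<^sup>2 - r\<^sup>2))\<^sup>2) = r"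
    using dual_radius(3)[OF r] r by simp
  show "1 < R / r" using r by simp
  show "R / r < sqrt 2 \<longleftrightarrow> sqrt 2 < R / sqrt (R\<^sup>2 - r\<^sup>2)"
    by (rule dual_radius_ratio[OF r])
qed

lemma bij_betw_dual_radius:
  "bij_betw (\<lambda>(R, r). (R, sqrt (R\<^sup>2 - r\<^sup>2)))
     {(R, r). standard_torus_index R r \<and> 1 < R / r \<and> R / r < sqrt 2}
     {(R, r). standard_torus_index R r \<and> sqrt 2 < R / r}"
  by (rule bij_betw_byWitness[where f' = "\<lambda>(R, r). (R, sqrt (R\<^sup>2 - r\<^sup>2))"])
     (auto simp: standard_torus_index_dual)

theorem proposition2:
  shows "(\<forall>R r. standard_torus_index R r \<and> 1 < R / r \<and> R / r < sqrt 2 \<longrightarrow>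
             conformally_equivalent R r R (sqrt (R\<^sup>2 - r\<^sup>2))) \<and>
         bij_betw (\<lambda>(R, r). (R, sqrt (R\<^sup>2 - r\<^sup>2)))
           {(R, r). standard_torus_index R r \<and> 1 < R / r \<and> R / r < sqrt 2}
           {(R, r). standard_torus_index R r \<and> sqrt 2 < R / r}"
  using conformally_equivalent_dual_torus bij_betw_dual_radius
  by (auto simp: standard_torus_index_def)

end
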